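(* For every $n\in\mathbb{N}_{\geq1}$, the GFB tree $T_n^{gfb}$ with $n$ leaves has minimal Colless index, i.e. $\mathcal{C}(T_n^{gfb})=c_n$, where $c_n$ is the minimum of $\mathcal{C}(T)$ over all rooted binary trees $T$ with $n$ leaves.
   Context: A rooted binary tree with $n\geq 2$ leaves is a rooted tree whose root has degree 2 and all other internal nodes have degree 3; for $n=1$ it is a single node. Trees are considered up to isomorphism. For an internal node $v$ with children $v_1,v_2$, let $\kappa(v_i)$ be the number of leaves descending from $v_i$ ($1$ if $v_i$ is a leaf). The Colless index is $\mathcal{C}(T)=\sum_v|\kappa(v_1)-\kappa(v_2)|$ over internal nodes $v$. The size of a tree is its number of leaves. The greedy from the bottom (GFB) tree $T_n^{gfb}$ is the output of the following procedure: start with a multiset of $n$ single-node trees; while the multiset contains more than one tree, remove a tree $u$ of minimal size, then remove a tree $v$ of minimal size among the remaining ones, and insert the tree consisting of a new root whose two children are the roots of $u$ and $v$; output the single remaining tree. (The output is unique up to isomorphism.) *)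

theory Defs
  imports Main "HOL-Library.Multiset"
begin

text \<open>Rooted binary trees (up to isomorphism: we work with ordered trees;
  the Colless index and the leaf count are invariant under swapping children).\<close>
datatype btree = Leaf | Node btree btree

fun leaves :: "btree \<Rightarrow> nat" where
  "leaves Leaf = 1"
| "leaves (Node l r) = leaves l + leaves r"

fun colless :: "btree \<Rightarrow> nat" where
  "colless Leaf = 0"
| "colless (Node l r) =
     nat \<bar>int (leaves l) - int (leaves r)\<bar> + colless l + colless r"

text \<open>A run of the greedy-from-the-bottom procedure starting from multiset M
  and ending with the single tree t. Ties may be broken arbitrarily.\<close>
inductive gfb_run :: "btree multiset \<Rightarrow> btree \<Rightarrow> bool" where
  finish: "gfb_run {#t#} t"
| step: "\<lbrakk> u \<in># M; \<forall>w\<in>#M. leaves u \<le> leaves w;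
           v \<in># M - {#u#}; \<forall>w\<in>#M - {#u#}. leaves v \<le> leaves w;
           gfb_run (add_mset (Node u v) (M - {#u#} - {#v#})) t \<rbrakk>
         \<Longrightarrow> gfb_run M t"

definition is_gfb :: "nat \<Rightarrow> btree \<Rightarrow> bool" where
  "is_gfb n t \<longleftrightarrow> gfb_run (replicate_mset n Leaf) t"

definition min_colless :: "nat \<Rightarrow> nat" where
  "min_colless n = Min {colless t | t. leaves t = n}"

end

theory Submission
  imports Defs
begin

text \<open>Let \<open>c(n)\<close> be given by \<open>c(0) = c(1) = 0\<close> and
  \<open>c(n) = (n mod 2) + c(\<lceil>n/2\<rceil>) + c(\<lfloor>n/2\<rfloor>)\<close>, the Colless index of the maximally
  balanced tree. The inequality \<open>c(a + b) \<le> |a - b| + c(a) + c(b)\<close>, proved by induction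
  on \<open>a + b\<close> with a case split on the parities of \<open>a\<close> and \<open>b\<close>, shows by induction on
  trees that \<open>c(n)\<close> is a lower bound for the Colless index of every tree with \<open>n\<close> leaves.
  Conversely, \<open>c(2\<^sup>k + x) = |2\<^sup>k - x| + c(x)\<close> whenever \<open>2\<^sup>k \<le> 2x\<close> and \<open>x \<le> 2\<^sup>k\<^sup>+\<^sup>1\<close>.
  Throughout a GFB run all tree sizes lie between two consecutive powers of two and at
  most one of them is not a power of two, so every merge joins a tree whose size is a
  power of two with a tree of comparable size, and each tree built has Colless index
  \<open>c\<close> of its size.\<close>

function balanced_colless :: "nat \<Rightarrow> nat" where
  "balanced_colless n = (if n \<le> 1 then 0
     else n mod 2 + balanced_colless ((n + 1) div 2) + balanced_colless (n div 2))"
  by auto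
termination by (relation "measure id") auto

declare balanced_colless.simps [simp del]

lemma balanced_colless_le_1 [simp]: "n \<le> 1 \<Longrightarrow> balanced_colless n = 0"
  by (simp add: balanced_colless.simps)

lemma balanced_colless_rec:
  "2 \<le> n \<Longrightarrow> balanced_colless n =
     n mod 2 + balanced_colless ((n + 1) div 2) + balanced_colless (n div 2)"
  by (subst balanced_colless.simps) simp

lemma balanced_colless_double: "balanced_colless (2 * n) = 2 * balanced_colless n"
  by (cases "n = 0") (simp_all add: balanced_colless_rec)

lemma balanced_colless_odd:
  "1 \<le> n \<Longrightarrow> balanced_colless (2 * n + 1) = 1 + balanced_colless (n + 1) + balanced_colless n"
  by (simp add: balanced_colless_rec)

lemma balanced_colless_pow2 [simp]: "balanced_colless (2 ^ k) = 0"
  by (induction k) (simp_all add: balanced_colless_double)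

definition absdiff :: "nat \<Rightarrow> nat \<Rightarrow> nat" where
  "absdiff a b = (if b \<le> a then a - b else b - a)"

lemma absdiff_commute: "absdiff a b = absdiff b a"
  by (simp add: absdiff_def)

lemma colless_Node:
  "colless (Node l r) = absdiff (leaves l) (leaves r) + colless l + colless r"
  by (simp add: absdiff_def nat_diff_distrib)

declare colless.simps(2) [simp del] colless_Node [simp]

lemma leaves_ge_1: "1 \<le> leaves t"
  by (induction t) auto

section \<open>The lower bound\<close>

lemma nat_parity_cases:
  fixes n :: nat
  obtains "n \<le> 1" | m where "n = 2 * m" "1 \<le> m" | m where "n = 2 * m + 1" "1 \<le> m"
proof -
  have "n \<le> 1 \<or> (\<exists>m. n = 2 * m \<and> 1 \<le> m) \<or> (\<exists>m. n = 2 * m + 1 \<and> 1 \<le> m)"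
    by presburger
  then show ?thesis using that by blast
qed

text \<open>The instance \<open>a = 1\<close> of \<open>balanced_colless_add_le\<close> below needs an induction of its
  own, since \<open>balanced_colless_odd\<close> fails for \<open>n = 0\<close>.\<close>

lemma balanced_colless_Suc_le: "balanced_colless (Suc n) \<le> (n - 1) + balanced_colless n"
proof (induction n rule: less_induct)
  case (less n)
  from nat_parity_cases[of n] show ?case
  proof cases
    case 1
    then show ?thesis by (cases n) (simp_all add: balanced_colless_rec)
  next
    case (2 m)
    have "balanced_colless (Suc m) \<le> (m - 1) + balanced_colless m" using less.IH[of m] 2 by simp
    moreover have "balanced_colless (Suc n) = 1 + balanced_colless (Suc m) + balanced_colless m"
      using 2 balanced_colless_odd[of m] by simp
    ultimately show ?thesis using 2 by (simp add: balanced_colless_double)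
  next
    case (3 m)
    have "balanced_colless (Suc m) \<le> (m - 1) + balanced_colless m" using less.IH[of m] 3 by simp
    moreover have "balanced_colless (Suc n) = 2 * balanced_colless (Suc m)"
      using 3 balanced_colless_double[of "Suc m"] by simp
    moreover have "balanced_colless n = 1 + balanced_colless (Suc m) + balanced_colless m"
      using 3 balanced_colless_odd[of m] by simp
    ultimately show ?thesis using 3 by simp
  qed
qed

lemma balanced_colless_add_le_1:
  "a \<le> 1 \<Longrightarrow> balanced_colless (a + b) \<le> absdiff a b + balanced_colless a + balanced_colless b"
  using balanced_colless_Suc_le[of b] by (cases a) (auto simp: absdiff_def)

lemma balanced_colless_add_le_double:
  assumes "balanced_colless (a + b) \<le> absdiff a b + balanced_colless a + balanced_colless b"
  shows "balanced_colless (2 * a + 2 * b)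
    \<le> absdiff (2 * a) (2 * b) + balanced_colless (2 * a) + balanced_colless (2 * b)"
proof -
  have "absdiff (2 * a) (2 * b) = 2 * absdiff a b" by (simp add: absdiff_def diff_mult_distrib2)
  then show ?thesis
    using assms balanced_colless_double[of "a + b"] by (simp add: balanced_colless_double)
qed

lemma balanced_colless_add_le_odd_odd:
  assumes "1 \<le> a" "1 \<le> b"
    and "balanced_colless (Suc a + b)
      \<le> absdiff (Suc a) b + balanced_colless (Suc a) + balanced_colless b"
    and "balanced_colless (a + Suc b)
      \<le> absdiff a (Suc b) + balanced_colless a + balanced_colless (Suc b)"
  shows "balanced_colless ((2 * a + 1) + (2 * b + 1))
    \<le> absdiff (2 * a + 1) (2 * b + 1) + balanced_colless (2 * a + 1) + balanced_colless (2 * b + 1)"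
proof -
  have "balanced_colless ((2 * a + 1) + (2 * b + 1))
      = balanced_colless (Suc a + b) + balanced_colless (a + Suc b)"
    using balanced_colless_double[of "Suc (a + b)"] by simp
  moreover have "absdiff (Suc a) b + absdiff a (Suc b) \<le> absdiff (2 * a + 1) (2 * b + 1) + 2"
    by (simp add: absdiff_def) arith
  moreover have "balanced_colless (2 * a + 1) = 1 + balanced_colless (Suc a) + balanced_colless a"
    and "balanced_colless (2 * b + 1) = 1 + balanced_colless (Suc b) + balanced_colless b"
    using assms(1,2) balanced_colless_odd[of a] balanced_colless_odd[of b] by simp_all
  ultimately show ?thesis using assms(3,4) by linarith
qed

lemma balanced_colless_add_le_even_odd:
  assumes "1 \<le> a" "1 \<le> b"
    and "balanced_colless (a + Suc b)
      \<le> absdiff a (Suc b) + balanced_colless a + balanced_colless (Suc b)"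
    and "balanced_colless (a + b) \<le> absdiff a b + balanced_colless a + balanced_colless b"
  shows "balanced_colless (2 * a + (2 * b + 1))
    \<le> absdiff (2 * a) (2 * b + 1) + balanced_colless (2 * a) + balanced_colless (2 * b + 1)"
proof -
  have "balanced_colless (2 * a + (2 * b + 1)) = 1 + balanced_colless (a + Suc b) + balanced_colless (a + b)"
    using balanced_colless_odd[of "a + b"] assms(1) by (simp add: algebra_simps)
  moreover have "absdiff a (Suc b) + absdiff a b \<le> absdiff (2 * a) (2 * b + 1)"
    by (simp add: absdiff_def) arith
  moreover have "balanced_colless (2 * a) = 2 * balanced_colless a"
    and "balanced_colless (2 * b + 1) = 1 + balanced_colless (Suc b) + balanced_colless b"
    using assms(2) balanced_colless_double[of a] balanced_colless_odd[of b] by simp_all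
  ultimately show ?thesis using assms(3,4) by linarith
qed

lemma balanced_colless_add_le:
  "balanced_colless (a + b) \<le> absdiff a b + balanced_colless a + balanced_colless b"
proof (induction "a + b" arbitrary: a b rule: less_induct)
  case less
  have swap: "balanced_colless (a + b) \<le> absdiff a b + balanced_colless a + balanced_colless b"
    if "balanced_colless (b + a) \<le> absdiff b a + balanced_colless b + balanced_colless a"
    using that by (simp add: add.commute absdiff_commute)
  consider "a \<le> 1 \<or> b \<le> 1"
    | a' b' where "a = 2 * a'" "b = 2 * b'" "1 \<le> a'" "1 \<le> b'"
    | a' b' where "a = 2 * a' + 1" "b = 2 * b' + 1" "1 \<le> a'" "1 \<le> b'"
    | a' b' where "a = 2 * a'" "b = 2 * b' + 1" "1 \<le> a'" "1 \<le> b'"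
    | a' b' where "a = 2 * a' + 1" "b = 2 * b'" "1 \<le> a'" "1 \<le> b'"
    by (cases a rule: nat_parity_cases; cases b rule: nat_parity_cases) auto
  then show ?case
  proof cases
    case 1
    then show ?thesis using balanced_colless_add_le_1 swap by blast
  next
    case (2 a' b')
    then show ?thesis using balanced_colless_add_le_double less[of a' b'] by simp
  next
    case (3 a' b')
    then show ?thesis
      using balanced_colless_add_le_odd_odd less[of "Suc a'" b'] less[of a' "Suc b'"] by simp
  next
    case (4 a' b')
    then show ?thesis
      using balanced_colless_add_le_even_odd less[of a' "Suc b'"] less[of a' b'] by simp
  next
    case (5 a' b')
    then show ?thesis
      using balanced_colless_add_le_even_odd[of b' a'] less[of b' "Suc a'"] less[of b' a'] swap
      by simp
  qed
qed

lemma balanced_colless_le_colless: "balanced_colless (leaves t) \<le> colless t"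
proof (induction t)
  case (Node l r)
  then show ?case
    using balanced_colless_add_le[of "leaves l" "leaves r"] by simp
qed simp

lemma colless_le_square: "colless t \<le> leaves t ^ 2"
proof (induction t)
  case (Node l r)
  have "absdiff (leaves l) (leaves r) \<le> 2 * leaves l * leaves r"
    using leaves_ge_1[of l] leaves_ge_1[of r] unfolding absdiff_def
    by (auto intro: le_trans[OF diff_le_self] simp: algebra_simps)
  then show ?case using Node.IH by (simp add: power2_sum)
qed simp

lemma min_colless_eqI:
  assumes "leaves t = n" "colless t = balanced_colless n"
  shows "min_colless n = balanced_colless n"
proof -
  let ?S = "{colless t |t. leaves t = n}"
  have "?S \<subseteq> {..n ^ 2}"
    using colless_le_square by auto
  then have "finite ?S"
    using finite_subset by blast
  moreover have "balanced_colless n \<le> c" if "c \<in> ?S" for c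
    using that balanced_colless_le_colless by auto
  moreover have "balanced_colless n \<in> ?S"
    using assms by (metis (mono_tags, lifting) mem_Collect_eq)
  ultimately show ?thesis
    unfolding min_colless_def by (rule Min_eqI)
qed

section \<open>Merging with a power of two\<close>

lemma balanced_colless_pow2_add:
  assumes "2 ^ k \<le> 2 * c" "c \<le> 2 * 2 ^ k"
  shows "balanced_colless (2 ^ k + c) = absdiff (2 ^ k) c + balanced_colless c"
  using assms
proof (induction k arbitrary: c)
  case 0
  then have "c = 1 \<or> c = 2" by auto
  then show ?case by (auto simp: balanced_colless_rec absdiff_def)
next
  case (Suc k)
  define Q :: nat where "Q = 2 ^ k"
  define h l where "h = (c + 1) div 2" and "l = c div 2"
  have Q: "2 ^ Suc k = 2 * Q" "Q = 1 \<or> even Q" "1 \<le> Q"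
    unfolding Q_def by (cases k) auto
  show ?case
  proof (cases "c = 1")
    case True
    then have "Q = 1" using Suc.prems Q by simp
    with True Q show ?thesis by (simp add: balanced_colless_rec absdiff_def)
  next
    case False
    then have "2 \<le> c" using Suc.prems Q by simp
    have hl: "Q \<le> 2 * h" "h \<le> 2 * Q" "Q \<le> 2 * l" "l \<le> 2 * Q"
      using Suc.prems Q \<open>2 \<le> c\<close> unfolding h_def l_def by auto
    \<comment> \<open>Halving splits \<open>2Q + c\<close> into \<open>Q + h\<close> and \<open>Q + l\<close>; as \<open>h\<close> and \<open>l\<close> lie on the
      same side of \<open>Q\<close>, the two differences add up to \<open>|2Q - c|\<close>.\<close>
    have "balanced_colless (2 * Q + c) = c mod 2 + balanced_colless (Q + h) + balanced_colless (Q + l)"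
    proof -
      have "(2 * Q + c + 1) div 2 = Q + h" "(2 * Q + c) div 2 = Q + l"
        unfolding h_def l_def by presburger+
      then show ?thesis using balanced_colless_rec[of "2 * Q + c"] \<open>2 \<le> c\<close> by simp
    qed
    also have "\<dots> = c mod 2 + absdiff Q h + absdiff Q l + balanced_colless h + balanced_colless l"
      using Suc.IH[of h] Suc.IH[of l] hl unfolding Q_def by simp
    also have "\<dots> = absdiff (2 * Q) c + balanced_colless c"
      using balanced_colless_rec[of c] \<open>2 \<le> c\<close> unfolding h_def l_def absdiff_def by auto
    finally show ?thesis using Q by simp
  qed
qed

definition is_pow2 :: "nat \<Rightarrow> bool" where
  "is_pow2 x \<longleftrightarrow> (\<exists>j. x = 2 ^ j)"

lemma is_pow2_between_eq:
  assumes "is_pow2 x" "2 ^ k \<le> x" "x < 2 ^ Suc k"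
  shows "x = 2 ^ k"
proof -
  obtain j where j: "x = 2 ^ j" using assms(1) unfolding is_pow2_def by blast
  have "k \<le> j" using assms(2) j by simp
  moreover have "(2::nat) ^ j < 2 ^ Suc k" using assms(3) j by simp
  then have "j < Suc k" by (rule power_less_imp_less_exp[rotated]) simp
  ultimately show ?thesis using j by simp
qed

lemma balanced_colless_add_between:
  assumes "is_pow2 a \<or> is_pow2 b"
    and "2 ^ k \<le> a" "a \<le> 2 ^ Suc k" "2 ^ k \<le> b" "b \<le> 2 ^ Suc k"
  shows "balanced_colless (a + b) = absdiff a b + balanced_colless a + balanced_colless b"
proof -
  have pow2_add: "balanced_colless (p + c) = absdiff p c + balanced_colless p + balanced_colless c"
    if p: "is_pow2 p" and range: "2 ^ k \<le> p" "p \<le> 2 ^ Suc k" "2 ^ k \<le> c" "c \<le> 2 ^ Suc k"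
    for p c
  proof -
    obtain j where j: "p = 2 ^ j" using p unfolding is_pow2_def by blast
    have "p \<le> 2 * c" "c \<le> 2 * p" using range by simp_all
    then show ?thesis using j balanced_colless_pow2_add by simp
  qed
  show ?thesis
    using assms pow2_add pow2_add[of b a] by (auto simp: add.commute absdiff_commute)
qed

section \<open>Runs of the greedy procedure\<close>

lemma multiset_remove_two:
  "u \<in># M \<Longrightarrow> v \<in># M - {#u#} \<Longrightarrow> M = add_mset u (add_mset v (M - {#u#} - {#v#}))"
  by (metis insert_DiffM)

lemma multiset_ex_min:
  fixes f :: "'a \<Rightarrow> nat"
  assumes "M \<noteq> {#}"
  shows "\<exists>u\<in>#M. \<forall>w\<in>#M. f u \<le> f w"
proof -
  obtain x where "x \<in># M" using assms by blast
  then show ?thesis using ex_has_least_nat[of "\<lambda>w. w \<in># M" x f] by blast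
qed

lemma two_smallest_eq_pow2:
  fixes a b c :: nat
  assumes "2 ^ k \<le> a" "a \<le> b" "b \<le> c" "c < 2 ^ Suc k"
    and "is_pow2 a \<or> is_pow2 b" "is_pow2 a \<or> is_pow2 c" "is_pow2 b \<or> is_pow2 c"
  shows "a = 2 ^ k" "b = 2 ^ k"
  using assms is_pow2_between_eq[of a k] is_pow2_between_eq[of b k] is_pow2_between_eq[of c k]
  by auto

text \<open>The second conjunct says that at most one tree has a size that is not a power of two
  (\<open>x\<close> need not occur in \<open>M\<close>).\<close>

definition balanced_forest :: "btree multiset \<Rightarrow> bool" where
  "balanced_forest M \<longleftrightarrow>
     (\<exists>k. \<forall>w\<in>#M. 2 ^ k \<le> leaves w \<and> leaves w \<le> 2 ^ Suc k)
     \<and> (\<exists>x. \<forall>w\<in>#M - {#x#}. is_pow2 (leaves w))"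

lemma balanced_forest_pow2_pair:
  assumes "balanced_forest M" "x \<in># M" "y \<in># M - {#x#}"
  shows "is_pow2 (leaves x) \<or> is_pow2 (leaves y)"
proof -
  obtain z where "\<forall>w\<in>#M - {#z#}. is_pow2 (leaves w)"
    using assms(1) unfolding balanced_forest_def by blast
  moreover have "x \<in># M - {#z#} \<or> y \<in># M - {#z#}"
    using assms(2,3) by (auto simp: in_diff_count split: if_splits)
  ultimately show ?thesis by blast
qed

lemma balanced_forest_smallest_eq_pow2:
  assumes M: "balanced_forest M"
    and K: "\<forall>w\<in>#M. 2 ^ k \<le> leaves w \<and> leaves w \<le> 2 ^ Suc k"
    and u: "u \<in># M" "\<forall>w\<in>#M. leaves u \<le> leaves w"
    and v: "v \<in># M - {#u#}" "\<forall>w\<in>#M - {#u#}. leaves v \<le> leaves w"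
    and c: "c \<in># M - {#u#} - {#v#}" "leaves c < 2 ^ Suc k"
  shows "leaves u = 2 ^ k \<and> leaves v = 2 ^ k"
proof -
  have vM: "v \<in># M" using v(1) by (rule in_diffD)
  have c_u: "c \<in># M - {#u#}" using c(1) by (rule in_diffD)
  have c_v: "c \<in># M - {#v#}" using c(1) by (metis in_diffD diff_right_commute)
  show ?thesis
    using two_smallest_eq_pow2[of k "leaves u" "leaves v" "leaves c"] c(2) K u v c_u vM
      balanced_forest_pow2_pair[OF M u(1) v(1)]
      balanced_forest_pow2_pair[OF M u(1) c_u]
      balanced_forest_pow2_pair[OF M vM c_v]
    by auto
qed

lemma balanced_forest_merge:
  assumes M: "balanced_forest M"
    and u: "u \<in># M" "\<forall>w\<in>#M. leaves u \<le> leaves w"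
    and v: "v \<in># M - {#u#}" "\<forall>w\<in>#M - {#u#}. leaves v \<le> leaves w"
  shows "balanced_forest (add_mset (Node u v) (M - {#u#} - {#v#}))"
proof -
  define R where "R = M - {#u#} - {#v#}"
  obtain k where K: "\<forall>w\<in>#M. 2 ^ k \<le> leaves w \<and> leaves w \<le> 2 ^ Suc k"
    using M unfolding balanced_forest_def by blast
  obtain z where z: "\<forall>w\<in>#M - {#z#}. is_pow2 (leaves w)"
    using M unfolding balanced_forest_def by blast
  have RM: "c \<in># M" if "c \<in># R" for c
    using that unfolding R_def by (meson in_diffD)
  consider (small) c where "c \<in># R" "leaves c < 2 ^ Suc k" | (full) "\<forall>c\<in>#R. leaves c = 2 ^ Suc k"
    using K RM by (meson not_le_imp_less order.antisym)
  then show ?thesis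
  proof cases
    case small
    then have new: "leaves (Node u v) = 2 ^ Suc k"
      using balanced_forest_smallest_eq_pow2[OF M K u v] unfolding R_def by simp
    have "w \<in># M - {#z#}" if "w \<in># add_mset (Node u v) R - {#z#}" "w \<noteq> Node u v" for w
      using that unfolding R_def by (auto simp: in_diff_count split: if_splits)
    then have "\<forall>w\<in>#add_mset (Node u v) R - {#z#}. is_pow2 (leaves w)"
      using z new unfolding is_pow2_def by blast
    moreover have "\<forall>w\<in>#add_mset (Node u v) R. 2 ^ k \<le> leaves w \<and> leaves w \<le> 2 ^ Suc k"
      using K RM new by auto
    ultimately show ?thesis
      unfolding balanced_forest_def R_def[symmetric] by blast
  next
    case full
    have "v \<in># M" using v(1) by (rule in_diffD)
    then have "2 ^ k \<le> leaves u \<and> leaves u \<le> 2 ^ Suc k" "2 ^ k \<le> leaves v \<and> leaves v \<le> 2 ^ Suc k"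
      using K u(1) by blast+
    then have "\<forall>w\<in>#add_mset (Node u v) R. 2 ^ Suc k \<le> leaves w \<and> leaves w \<le> 2 ^ Suc (Suc k)"
      using full by auto
    moreover have "\<forall>c\<in>#R. is_pow2 (leaves c)"
      using full unfolding is_pow2_def by blast
    then have "\<forall>w\<in>#add_mset (Node u v) R - {#Node u v#}. is_pow2 (leaves w)"
      by simp
    ultimately show ?thesis
      unfolding balanced_forest_def R_def[symmetric] by blast
  qed
qed

lemma balanced_forest_replicate_Leaf: "balanced_forest (replicate_mset n Leaf)"
proof -
  have "is_pow2 (leaves Leaf)"
    unfolding is_pow2_def by (metis leaves.simps(1) power_0)
  then show ?thesis
    unfolding balanced_forest_def by (auto dest: in_diffD intro!: exI[of _ 0] exI[of _ Leaf])
qed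

lemma gfb_run_colless:
  assumes "gfb_run M t" "balanced_forest M" "\<forall>w\<in>#M. colless w = balanced_colless (leaves w)"
  shows "colless t = balanced_colless (leaves t)"
  using assms
proof (induction rule: gfb_run.induct)
  case (step u M v t)
  have vM: "v \<in># M" using step.hyps(3) by (rule in_diffD)
  obtain k where "\<forall>w\<in>#M. 2 ^ k \<le> leaves w \<and> leaves w \<le> 2 ^ Suc k"
    using step.prems(1) unfolding balanced_forest_def by blast
  then have "colless (Node u v) = balanced_colless (leaves (Node u v))"
    using balanced_colless_add_between[of "leaves u" "leaves v" k]
      balanced_forest_pow2_pair[OF step.prems(1) step.hyps(1,3)] step.hyps(1) step.prems(2) vM
    by simp
  moreover have "balanced_forest (add_mset (Node u v) (M - {#u#} - {#v#}))"
    using balanced_forest_merge step.prems(1) step.hyps(1-4) by blast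
  ultimately show ?case
    using step.IH step.prems(2) by (auto dest: in_diffD)
qed simp

lemma gfb_run_leaves: "gfb_run M t \<Longrightarrow> leaves t = (\<Sum>w\<in>#M. leaves w)"
proof (induction rule: gfb_run.induct)
  case (step u M v t)
  define R where "R = M - {#u#} - {#v#}"
  have "M = add_mset u (add_mset v R)"
    unfolding R_def by (rule multiset_remove_two[OF step.hyps(1,3)])
  then show ?case
    using step.IH unfolding R_def[symmetric] by simp
qed simp

lemma gfb_run_exists: "M \<noteq> {#} \<Longrightarrow> \<exists>t. gfb_run M t"
proof (induction "size M" arbitrary: M rule: less_induct)
  case less
  show ?case
  proof (cases "size M = 1")
    case True
    then obtain t where "M = {#t#}" using size_1_singleton_mset by blast
    then show ?thesis using gfb_run.finish by blast
  next
    case False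
    obtain u where u: "u \<in># M" "\<forall>w\<in>#M. leaves u \<le> leaves w"
      using multiset_ex_min[OF less.prems] by blast
    have "size (M - {#u#}) = size M - 1" using u(1) by (rule size_Diff_singleton)
    moreover have "size M \<noteq> 0" using less.prems by simp
    ultimately have "size (M - {#u#}) \<noteq> 0" using False by linarith
    then obtain v where v: "v \<in># M - {#u#}" "\<forall>w\<in>#M - {#u#}. leaves v \<le> leaves w"
      using multiset_ex_min[of "M - {#u#}" leaves] by auto
    define R where "R = M - {#u#} - {#v#}"
    have "M = add_mset u (add_mset v R)"
      unfolding R_def by (rule multiset_remove_two[OF u(1) v(1)])
    then have "size (add_mset (Node u v) R) < size M" by simp
    then have "\<exists>t. gfb_run (add_mset (Node u v) R) t"
      using less.hyps by simp
    then show ?thesis using gfb_run.step[OF u v] unfolding R_def by blast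
  qed
qed

theorem theorem5:
  fixes n :: nat
  assumes "n \<ge> 1"
  shows "(\<exists>t. is_gfb n t) \<and> (\<forall>t. is_gfb n t \<longrightarrow> colless t = min_colless n)"
proof -
  have gfb: "leaves t = n \<and> colless t = balanced_colless n" if "is_gfb n t" for t
    using that gfb_run_leaves gfb_run_colless[OF _ balanced_forest_replicate_Leaf]
    unfolding is_gfb_def by simp
  obtain t where "is_gfb n t"
    using gfb_run_exists[of "replicate_mset n Leaf"] assms unfolding is_gfb_def by auto
  then have "min_colless n = balanced_colless n"
    using gfb min_colless_eqI by blast
  then show ?thesis
    using gfb \<open>is_gfb n t\<close> by auto
qed

end
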